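(* Let $G$ be a distribution of $\theta=(\theta_1,\theta_2)$ with bounded support, where $\theta_2=p\in[0,1]$, and let $(\theta_i,Y_i)$, $i=1,\dots,n$, be i.i.d., $Y_i=(X_i,K_i)$, with $X_i\mid K_i,\theta_i\sim B(K_i,p_i)$ and either (i) (binomial sampling) $\theta_1=\pi\in[0,1]$ and $K_i\mid\theta_i\sim B(\kappa,\pi_i)$ for a fixed integer $\kappa\ge1$, or (ii) (Poisson sampling) $\theta_1=\lambda\ge0$ and $K_i\mid\theta_i\sim\mathrm{Poisson}(\lambda_i)$. Assume $G$ satisfies: for a sequence $\varepsilon_n\to0$ and $S_n=\{y:P_G(Y=y)\ge\varepsilon_n/n\}$, (a) $P_G(Y\in S_n)=1-o(1/n)$ and (b) for $\varepsilon_n\to0$ sufficiently slowly $|S_n|=O(\log n)$. Let $\hat G$ be a generalized maximum likelihood estimator of $G$ based on $Y_1,\dots,Y_n$, let $\hat\eta=E_{\hat G}\Theta_2$, and let $\tilde\eta^*=\frac1n\sum_i\Psi^*(Y_i)$ where $\Psi^*(X,K)=X/K$ if $K>0$ and $\Psi^*(X,K)=E_{\hat G}(\Theta_2\mid K=0)$ if $K=0$. Then in case (i), $\tilde\eta^*-\hat\eta=O_p(1/\sqrt n)$, and in case (ii), $\tilde\eta^*-\hat\eta=o_p\big((\log n)^{(1+\alpha)/2}/\sqrt n\big)$ for every $\alpha>0$.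
   Context: A GMLE $\hat G$ maximizes $\prod_i\int f_\theta(Y_i)\,d\tilde G(\theta)$ over probability distributions $\tilde G$, where $f_\theta$ is the conditional mass function of $(X,K)$ given $\theta$. $E_{\hat G}(\Theta_2\mid K=0)$ is the conditional mean of $p$ given $K=0$ when $\Theta\sim\hat G$ and $(X,K)\mid\Theta\sim f_\Theta$. *)

theory Defs
  imports "HOL-Probability.Probability" "HOL-Library.Landau_Symbols"
begin

text \<open>Sampling scheme for K given theta1: binomial with fixed kappa, or Poisson.\<close>
datatype sampling = BinomS nat | PoisS

fun param_space :: "sampling \<Rightarrow> (real \<times> real) set" where
  "param_space (BinomS \<kappa>) = {0..1} \<times> {0..1}"
| "param_space PoisS = {0..} \<times> {0..1}"

fun kdens :: "sampling \<Rightarrow> real \<Rightarrow> nat \<Rightarrow> real" where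
  "kdens (BinomS \<kappa>) l k =
     (if k \<le> \<kappa> then real (\<kappa> choose k) * l ^ k * (1 - l) ^ (\<kappa> - k) else 0)"
| "kdens PoisS l k = exp (- l) * l ^ k / fact k"

definition binom_dens :: "nat \<Rightarrow> real \<Rightarrow> nat \<Rightarrow> real" where
  "binom_dens k p x = (if x \<le> k then real (k choose x) * p ^ x * (1 - p) ^ (k - x) else 0)"

text \<open>f_theta(x,k): conditional mass function of Y = (X,K) given theta.\<close>
definition fdens :: "sampling \<Rightarrow> real \<times> real \<Rightarrow> nat \<times> nat \<Rightarrow> real" where
  "fdens s \<theta> y = kdens s (fst \<theta>) (snd y) * binom_dens (snd y) (snd \<theta>) (fst y)"

definition mix :: "sampling \<Rightarrow> (real \<times> real) measure \<Rightarrow> nat \<times> nat \<Rightarrow> real" where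
  "mix s G y = (\<integral>\<theta>. fdens s \<theta> y \<partial>G)"

definition lik :: "sampling \<Rightarrow> (real \<times> real) measure \<Rightarrow> (nat \<times> nat) list \<Rightarrow> real" where
  "lik s G ys = (\<Prod>y\<leftarrow>ys. mix s G y)"

definition is_param_dist :: "sampling \<Rightarrow> (real \<times> real) measure \<Rightarrow> bool" where
  "is_param_dist s G \<longleftrightarrow> prob_space G \<and> sets G = sets borel \<and> (AE \<theta> in G. \<theta> \<in> param_space s)"

definition is_GMLE :: "sampling \<Rightarrow> (nat \<times> nat) list \<Rightarrow> (real \<times> real) measure \<Rightarrow> bool" where
  "is_GMLE s ys Gh \<longleftrightarrow> is_param_dist s Gh \<and>
     (\<forall>G'. is_param_dist s G' \<longrightarrow> lik s G' ys \<le> lik s Gh ys)"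

definition eta_hat :: "(real \<times> real) measure \<Rightarrow> real" where
  "eta_hat G = (\<integral>\<theta>. snd \<theta> \<partial>G)"

text \<open>E_G(Theta_2 | K = 0).\<close>
definition cond_mean_K0 :: "sampling \<Rightarrow> (real \<times> real) measure \<Rightarrow> real" where
  "cond_mean_K0 s G =
     (\<integral>\<theta>. snd \<theta> * kdens s (fst \<theta>) 0 \<partial>G) / (\<integral>\<theta>. kdens s (fst \<theta>) 0 \<partial>G)"

definition Psi_star :: "sampling \<Rightarrow> (real \<times> real) measure \<Rightarrow> nat \<times> nat \<Rightarrow> real" where
  "Psi_star s G y = (if snd y > 0 then real (fst y) / real (snd y) else cond_mean_K0 s G)"

definition eta_tilde :: "sampling \<Rightarrow> (real \<times> real) measure \<Rightarrow> (nat \<times> nat) list \<Rightarrow> real" where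
  "eta_tilde s G ys = (\<Sum>y\<leftarrow>ys. Psi_star s G y) / real (length ys)"

text \<open>Probability that (Y_1,...,Y_n), i.i.d. with mass mix s G, lies in A.\<close>
definition data_prob :: "sampling \<Rightarrow> (real \<times> real) measure \<Rightarrow> nat \<Rightarrow> (nat \<times> nat) list set \<Rightarrow> real" where
  "data_prob s G n A = infsum (lik s G) {ys \<in> A. length ys = n}"

definition bigOp :: "sampling \<Rightarrow> (real \<times> real) measure \<Rightarrow> (nat \<Rightarrow> (nat \<times> nat) list \<Rightarrow> real) \<Rightarrow> (nat \<Rightarrow> real) \<Rightarrow> bool" where
  "bigOp s G Z a \<longleftrightarrow> (\<forall>\<epsilon>>0. \<exists>M N. \<forall>n\<ge>N. data_prob s G n {ys. \<bar>Z n ys\<bar> > M * a n} < \<epsilon>)"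

definition littleOp :: "sampling \<Rightarrow> (real \<times> real) measure \<Rightarrow> (nat \<Rightarrow> (nat \<times> nat) list \<Rightarrow> real) \<Rightarrow> (nat \<Rightarrow> real) \<Rightarrow> bool" where
  "littleOp s G Z a \<longleftrightarrow> (\<forall>\<delta>>0. \<forall>\<epsilon>>0. \<exists>N. \<forall>n\<ge>N. data_prob s G n {ys. \<bar>Z n ys\<bar> > \<delta> * a n} < \<epsilon>)"

end

theory Submission
  imports Defs "HOL-Real_Asymp.Real_Asymp"
begin

text \<open>
  Let \<open>e\<close> be the empirical mass function of the data, \<open>f = P\<^sub>G\<close>, \<open>g = P\<^sub>G\<^sub>h\<^sub>a\<^sub>t\<close>, and let \<open>S\<close> be
  a finite set of points of positive \<open>f\<close>-mass that misses \<open>f\<close>-mass \<open>\<tau>\<close>.  Since \<open>X/K\<close> is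
  conditionally unbiased for \<open>p\<close> and \<open>\<Psi>*\<close> uses the posterior mean of \<open>p\<close> at \<open>K = 0\<close>, once all
  data lie in \<open>S\<close> the two estimators differ by at most \<open>\<Sum>\<^sub>S |e - g| + (1 - \<Sum>\<^sub>S g)\<close>.
  Comparing the likelihood of \<open>G\<^sub>h\<^sub>a\<^sub>t\<close> with that of \<open>G\<close> gives \<open>\<Sum>\<^sub>S e (\<surd>(g/f) - 1) \<ge> 0\<close>, which by
  Cauchy-Schwarz bounds the Hellinger distance between \<open>f\<close> and \<open>g\<close>, and with it the previous
  quantity, by \<open>O(\<chi> + \<surd>\<tau>)\<close>, where \<open>\<chi>\<^sup>2 = \<Sum>\<^sub>S (e - f)\<^sup>2 / f\<close>.  As \<open>E \<chi>\<^sup>2 \<le> |S| / n\<close> and the data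
  leave \<open>S\<close> with probability at most \<open>n \<tau>\<close>, the difference is \<open>O\<^sub>p(\<surd>(|S| / n) + \<surd>\<tau>)\<close>.  Under
  binomial sampling \<open>S\<close> is the finite support of \<open>P\<^sub>G\<close> and \<open>\<tau> = 0\<close>; under Poisson sampling \<open>S\<^sub>n\<close>
  is the set of the tail condition, with \<open>|S\<^sub>n| = O(log n)\<close> and \<open>n \<tau>\<^sub>n \<rightarrow> 0\<close>.
\<close>

section \<open>The sampling model\<close>

lemma binom_dens_nonneg: "p \<in> {0..1} \<Longrightarrow> 0 \<le> binom_dens k p x"
  by (auto simp: binom_dens_def)

lemma binom_dens_eq_0: "k < x \<Longrightarrow> binom_dens k p x = 0"
  by (simp add: binom_dens_def)

lemma sum_binom_dens: "(\<Sum>x\<le>k. binom_dens k p x) = 1"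
proof -
  have "(\<Sum>x\<le>k. binom_dens k p x) = (\<Sum>x\<le>k. real (k choose x) * p ^ x * (1 - p) ^ (k - x))"
    by (auto simp: binom_dens_def)
  also have "\<dots> = (p + (1 - p)) ^ k"
    by (subst binomial_ring) (simp add: atLeast0AtMost)
  finally show ?thesis by simp
qed

lemma sum_binom_dens_mean: "(\<Sum>x\<le>k. real x * binom_dens k p x) = real k * p"
proof (cases k)
  case 0
  then show ?thesis by (simp add: binom_dens_def)
next
  case (Suc m)
  have "(\<Sum>x\<le>Suc m. real x * binom_dens (Suc m) p x)
      = (\<Sum>x\<le>m. real (Suc x) * binom_dens (Suc m) p (Suc x))"
    by (subst sum.atMost_Suc_shift) simp
  also have "\<dots> = (\<Sum>x\<le>m. real (Suc m) * p * (real (m choose x) * p ^ x * (1 - p) ^ (m - x)))"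
  proof (rule sum.cong[OF refl])
    fix x assume x: "x \<in> {..m}"
    have choose: "real (Suc x) * real (Suc m choose Suc x) = real (Suc m) * real (m choose x)"
      using Suc_times_binomial[of x m] by (metis of_nat_mult)
    have "real (Suc x) * binom_dens (Suc m) p (Suc x)
        = (real (Suc x) * real (Suc m choose Suc x)) * p ^ Suc x * (1 - p) ^ (m - x)"
      using x by (simp add: binom_dens_def)
    also have "\<dots> = real (Suc m) * p * (real (m choose x) * p ^ x * (1 - p) ^ (m - x))"
      by (simp only: choose) (simp add: algebra_simps)
    finally show "real (Suc x) * binom_dens (Suc m) p (Suc x)
        = real (Suc m) * p * (real (m choose x) * p ^ x * (1 - p) ^ (m - x))" .
  qed
  also have "\<dots> = real (Suc m) * p * (p + (1 - p)) ^ m"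
    by (subst binomial_ring) (simp add: atLeast0AtMost sum_distrib_left)
  finally show ?thesis using Suc by simp
qed

lemma param_space_fst: "\<theta> \<in> param_space s \<Longrightarrow> fst \<theta> \<in> fst ` param_space s"
  by auto

lemma param_space_snd: "\<theta> \<in> param_space s \<Longrightarrow> snd \<theta> \<in> {0..1}"
  by (cases s) auto

lemma kdens_nonneg: "l \<in> fst ` param_space s \<Longrightarrow> 0 \<le> kdens s l k"
  by (cases s) auto

lemma kdens_sums: "l \<in> fst ` param_space s \<Longrightarrow> kdens s l sums 1"
proof (cases s)
  case (BinomS \<kappa>)
  have "kdens s l sums (\<Sum>k\<le>\<kappa>. kdens s l k)"
    by (rule sums_finite) (auto simp: BinomS)
  also have "(\<Sum>k\<le>\<kappa>. kdens s l k) = (l + (1 - l)) ^ \<kappa>"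
    by (subst binomial_ring) (simp add: atLeast0AtMost BinomS)
  finally show ?thesis by simp
next
  case PoisS
  have "(\<lambda>k. exp (- l) * (l ^ k /\<^sub>R fact k)) sums (exp (- l) * exp l)"
    by (intro sums_mult exp_converges)
  moreover have "exp (- l) * (l ^ k /\<^sub>R fact k) = kdens s l k" for k
    by (simp add: PoisS divide_inverse mult.commute)
  moreover have "exp (- l) * exp l = 1"
    by (simp add: exp_minus_inverse mult.commute)
  ultimately show ?thesis by simp
qed

lemma sum_kdens_le_1: "l \<in> fst ` param_space s \<Longrightarrow> finite I \<Longrightarrow> sum (kdens s l) I \<le> 1"
  using sum_le_suminf[of "kdens s l" I] kdens_sums[of l s] kdens_nonneg[of l s]
  by (simp add: sums_iff)

lemma fdens_nonneg: "\<theta> \<in> param_space s \<Longrightarrow> 0 \<le> fdens s \<theta> y"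
  unfolding fdens_def
  using kdens_nonneg[OF param_space_fst] binom_dens_nonneg[OF param_space_snd] by simp

lemma fdens_eq_0: "snd y < fst y \<Longrightarrow> fdens s \<theta> y = 0"
  by (simp add: fdens_def binom_dens_eq_0)

text \<open>
  The estimator \<open>X/K\<close> of \<open>p\<close>, completed at \<open>K = 0\<close> by the true \<open>p\<close>; \<open>Psi_star\<close> replaces
  that value by its posterior mean, see \<open>mix_mult_Psi_star\<close>.
\<close>
definition psi_oracle :: "real \<Rightarrow> nat \<times> nat \<Rightarrow> real" where
  "psi_oracle p y = (if snd y > 0 then real (fst y) / real (snd y) else p)"

lemma psi_oracle_nonneg: "\<theta> \<in> param_space s \<Longrightarrow> 0 \<le> psi_oracle (snd \<theta>) y"
  using param_space_snd[of \<theta> s] by (auto simp: psi_oracle_def)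

lemma psi_oracle_le_1:
  "\<theta> \<in> param_space s \<Longrightarrow> fdens s \<theta> y \<noteq> 0 \<Longrightarrow> psi_oracle (snd \<theta>) y \<le> 1"
  using param_space_snd[of \<theta> s] fdens_eq_0[of y s \<theta>]
  by (cases y) (force simp: psi_oracle_def not_less)

lemma sum_binom_dens_psi_oracle: "(\<Sum>x\<le>k. binom_dens k p x * psi_oracle p (x, k)) = p"
proof (cases "k = 0")
  case True
  then show ?thesis by (simp add: binom_dens_def psi_oracle_def)
next
  case False
  then have "(\<Sum>x\<le>k. binom_dens k p x * psi_oracle p (x, k))
      = (\<Sum>x\<le>k. real x * binom_dens k p x) / real k"
    by (simp add: psi_oracle_def sum_divide_distrib mult.commute)
  with False show ?thesis by (simp add: sum_binom_dens_mean)
qed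

lemma sum_binom_dens_one_minus_psi_oracle:
  "(\<Sum>x\<le>k. binom_dens k p x * (1 - psi_oracle p (x, k))) = 1 - p"
  using sum_binom_dens_psi_oracle[of k p] sum_binom_dens[of k p]
  by (simp add: algebra_simps sum_subtractf)

lemma sum_fdens_square:
  "(\<Sum>y\<in>{..K}\<times>{..K}. fdens s \<theta> y * h y)
     = (\<Sum>k\<le>K. kdens s (fst \<theta>) k * (\<Sum>x\<le>k. binom_dens k (snd \<theta>) x * h (x, k)))"
proof -
  have "(\<Sum>y\<in>{..K}\<times>{..K}. fdens s \<theta> y * h y) = (\<Sum>x\<le>K. \<Sum>k\<le>K. fdens s \<theta> (x, k) * h (x, k))"
    by (simp add: sum.cartesian_product)
  also have "\<dots> = (\<Sum>k\<le>K. \<Sum>x\<le>K. fdens s \<theta> (x, k) * h (x, k))"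
    by (rule sum.swap)
  also have "\<dots> = (\<Sum>k\<le>K. kdens s (fst \<theta>) k * (\<Sum>x\<le>k. binom_dens k (snd \<theta>) x * h (x, k)))"
  proof (rule sum.cong[OF refl])
    fix k assume k: "k \<in> {..K}"
    then have "(\<Sum>x\<le>K. fdens s \<theta> (x, k) * h (x, k)) = (\<Sum>x\<le>k. fdens s \<theta> (x, k) * h (x, k))"
      by (intro sum.mono_neutral_right) (auto simp: fdens_eq_0)
    then show "(\<Sum>x\<le>K. fdens s \<theta> (x, k) * h (x, k))
        = kdens s (fst \<theta>) k * (\<Sum>x\<le>k. binom_dens k (snd \<theta>) x * h (x, k))"
      by (simp add: fdens_def sum_distrib_left mult.assoc)
  qed
  finally show ?thesis .
qed

lemma finite_subset_square: "finite (S :: (nat \<times> nat) set) \<Longrightarrow> \<exists>K. S \<subseteq> {..K}\<times>{..K}"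
proof -
  assume "finite S"
  then obtain K where "\<forall>y\<in>S. fst y \<le> K \<and> snd y \<le> K"
    using finite_nat_set_iff_bounded_le[of "fst ` S \<union> snd ` S"] by auto
  then show ?thesis by (intro exI[of _ K]) (auto simp: subset_iff)
qed

lemma sum_fdens_mult_le:
  assumes \<theta>: "\<theta> \<in> param_space s" and S: "finite S"
    and h: "\<And>y. 0 \<le> fdens s \<theta> y * h y"
    and c: "0 \<le> c" "\<And>k. (\<Sum>x\<le>k. binom_dens k (snd \<theta>) x * h (x, k)) = c"
  shows "(\<Sum>y\<in>S. fdens s \<theta> y * h y) \<le> c"
proof -
  obtain K where K: "S \<subseteq> {..K}\<times>{..K}" using finite_subset_square[OF S] by blast
  then have "(\<Sum>y\<in>S. fdens s \<theta> y * h y) \<le> (\<Sum>y\<in>{..K}\<times>{..K}. fdens s \<theta> y * h y)"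
    by (intro sum_mono2 h) auto
  also have "\<dots> = (\<Sum>k\<le>K. kdens s (fst \<theta>) k * c)"
    by (simp only: sum_fdens_square c(2))
  also have "\<dots> = c * (\<Sum>k\<le>K. kdens s (fst \<theta>) k)"
    by (simp add: sum_distrib_left mult.commute)
  also have "\<dots> \<le> c * 1"
    using c(1) sum_kdens_le_1[OF param_space_fst[OF \<theta>]] by (intro mult_left_mono) auto
  finally show ?thesis by simp
qed

lemma sum_fdens_psi_oracle_le:
  assumes \<theta>: "\<theta> \<in> param_space s" and S: "finite S"
  shows "(\<Sum>y\<in>S. fdens s \<theta> y * psi_oracle (snd \<theta>) y) \<le> snd \<theta>"
  using fdens_nonneg[OF \<theta>] psi_oracle_nonneg[OF \<theta>] param_space_snd[OF \<theta>]
  by (intro sum_fdens_mult_le[OF \<theta> S]) (auto simp: sum_binom_dens_psi_oracle)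

lemma sum_fdens_one_minus_psi_oracle_le:
  assumes \<theta>: "\<theta> \<in> param_space s" and S: "finite S"
  shows "(\<Sum>y\<in>S. fdens s \<theta> y * (1 - psi_oracle (snd \<theta>) y)) \<le> 1 - snd \<theta>"
proof (rule sum_fdens_mult_le[OF \<theta> S])
  show "0 \<le> fdens s \<theta> y * (1 - psi_oracle (snd \<theta>) y)" for y
    using fdens_nonneg[OF \<theta>, of y] psi_oracle_le_1[OF \<theta>, of y] by (cases "fdens s \<theta> y = 0") auto
qed (use param_space_snd[OF \<theta>] sum_binom_dens_one_minus_psi_oracle in auto)

lemma sum_fdens_le_1: "\<theta> \<in> param_space s \<Longrightarrow> finite S \<Longrightarrow> (\<Sum>y\<in>S. fdens s \<theta> y) \<le> 1"
  using add_mono[OF sum_fdens_psi_oracle_le[of \<theta> s S] sum_fdens_one_minus_psi_oracle_le[of \<theta> s S]]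
  by (simp add: algebra_simps sum.distrib sum_subtractf)

lemma fdens_le_1: "\<theta> \<in> param_space s \<Longrightarrow> fdens s \<theta> y \<le> 1"
  using sum_fdens_le_1[of \<theta> s "{y}"] by simp

lemma borel_measurable_fdens: "(\<lambda>\<theta>. fdens s \<theta> y) \<in> borel_measurable borel"
  unfolding fdens_def binom_dens_def
  by (cases s; cases "fst y \<le> snd y"; cases "\<exists>k. s = BinomS k \<and> snd y \<le> k")
     (auto intro!: borel_measurable_continuous_onI continuous_intros)

lemma borel_measurable_psi_oracle: "(\<lambda>\<theta>::real \<times> real. psi_oracle (snd \<theta>) y) \<in> borel_measurable borel"
  unfolding psi_oracle_def
  by (cases "snd y > 0") (auto intro!: borel_measurable_continuous_onI continuous_intros)

lemma sum_fdens_column: "\<theta> \<in> param_space s \<Longrightarrow> (\<Sum>x\<le>k. fdens s \<theta> (x, k)) = kdens s (fst \<theta>) k"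
  using sum_binom_dens[of k "snd \<theta>"] by (simp add: fdens_def sum_distrib_left[symmetric])

lemma nn_integral_fdens:
  assumes \<theta>: "\<theta> \<in> param_space s"
  shows "(\<integral>\<^sup>+y. ennreal (fdens s \<theta> y) \<partial>count_space UNIV) = 1"
proof -
  let ?f = "\<lambda>y. ennreal (fdens s \<theta> y)"
  have "(\<integral>\<^sup>+y. ?f y \<partial>count_space UNIV)
      = (\<integral>\<^sup>+y. \<integral>\<^sup>+k. ?f y * indicator {snd y} k \<partial>count_space UNIV \<partial>count_space UNIV)"
    by (simp add: nn_integral_indicator_singleton)
  also have "\<dots> = (\<integral>\<^sup>+k. \<integral>\<^sup>+y. ?f y * indicator {snd y} k \<partial>count_space UNIV \<partial>count_space UNIV)"
    by (rule nn_integral_count_space_nn_integral) auto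
  also have "\<dots> = (\<integral>\<^sup>+k. ennreal (kdens s (fst \<theta>) k) \<partial>count_space UNIV)"
  proof (rule nn_integral_cong)
    fix k :: nat
    have "(\<integral>\<^sup>+y. ?f y * indicator {snd y} k \<partial>count_space UNIV)
        = (\<Sum>y\<in>{..k}\<times>{k}. ?f y * indicator {snd y} k)"
      by (rule nn_integral_count_space') (auto simp: fdens_def binom_dens_def split: split_indicator)
    also have "\<dots> = (\<Sum>x\<le>k. ?f (x, k))"
      by (rule sum.reindex_bij_witness[of _ "\<lambda>x. (x, k)" fst]) auto
    also have "\<dots> = ennreal (\<Sum>x\<le>k. fdens s \<theta> (x, k))"
      using fdens_nonneg[OF \<theta>] by (rule sum_ennreal)
    also have "\<dots> = ennreal (kdens s (fst \<theta>) k)"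
      by (simp only: sum_fdens_column[OF \<theta>])
    finally show "(\<integral>\<^sup>+y. ?f y * indicator {snd y} k \<partial>count_space UNIV) = ennreal (kdens s (fst \<theta>) k)" .
  qed
  also have "\<dots> = 1"
    using kdens_sums[OF param_space_fst[OF \<theta>]] kdens_nonneg[OF param_space_fst[OF \<theta>]]
    by (simp add: nn_integral_count_space_nat suminf_ennreal2 sums_iff)
  finally show ?thesis .
qed

section \<open>Mixtures\<close>

lemma fst_le_snd_if_mix_nonzero: "mix s G y \<noteq> 0 \<Longrightarrow> fst y \<le> snd y"
  by (rule ccontr) (simp add: mix_def fdens_eq_0)

context
  fixes s G assumes G: "is_param_dist s G"
begin

lemma prob_space_param_dist: "prob_space G"
  using G by (simp add: is_param_dist_def)

lemma AE_param_space: "AE \<theta> in G. \<theta> \<in> param_space s"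
  using G by (simp add: is_param_dist_def)

lemma integrable_param_dist:
  assumes "f \<in> borel_measurable borel" "\<And>\<theta>. \<theta> \<in> param_space s \<Longrightarrow> \<bar>f \<theta>\<bar> \<le> 1"
  shows "integrable G (f :: _ \<Rightarrow> real)"
proof -
  interpret prob_space G by (rule prob_space_param_dist)
  show ?thesis
  proof (rule integrable_const_bound[where B = 1])
    show "AE x in G. norm (f x) \<le> 1"
      using AE_param_space by eventually_elim (simp add: assms(2))
    have "sets G = sets borel"
      using G by (simp add: is_param_dist_def)
    then show "f \<in> borel_measurable G"
      by (subst measurable_cong_sets[OF _ refl]) (use assms(1) in auto)
  qed
qed

lemma integrable_fdens: "integrable G (\<lambda>\<theta>. fdens s \<theta> y)"
  by (rule integrable_param_dist[OF borel_measurable_fdens])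
     (metis abs_of_nonneg fdens_nonneg fdens_le_1)

lemma integrable_fdens_psi_oracle: "integrable G (\<lambda>\<theta>. fdens s \<theta> y * psi_oracle (snd \<theta>) y)"
proof (rule integrable_param_dist)
  show "(\<lambda>\<theta>. fdens s \<theta> y * psi_oracle (snd \<theta>) y) \<in> borel_measurable borel"
    using borel_measurable_fdens borel_measurable_psi_oracle by (rule borel_measurable_times)
  show "\<bar>fdens s \<theta> y * psi_oracle (snd \<theta>) y\<bar> \<le> 1" if \<theta>: "\<theta> \<in> param_space s" for \<theta>
  proof (cases "fdens s \<theta> y = 0")
    case False
    then show ?thesis
      using fdens_nonneg[OF \<theta>] fdens_le_1[OF \<theta>] psi_oracle_le_1[OF \<theta> False] psi_oracle_nonneg[OF \<theta>]
      by (simp add: abs_mult mult_le_one)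
  qed simp
qed

lemma integrable_snd: "integrable G snd"
  by (rule integrable_param_dist)
     (auto intro!: borel_measurable_continuous_onI continuous_intros dest: param_space_snd)

lemma mix_nonneg: "0 \<le> mix s G y"
  unfolding mix_def by (rule integral_nonneg_AE) (use AE_param_space in eventually_elim, rule fdens_nonneg)

lemma sum_mix: "(\<Sum>y\<in>S. mix s G y) = (\<integral>\<theta>. (\<Sum>y\<in>S. fdens s \<theta> y) \<partial>G)"
  unfolding mix_def by (rule Bochner_Integration.integral_sum[symmetric]) (rule integrable_fdens)

lemma sum_mix_le_1:
  assumes S: "finite S"
  shows "(\<Sum>y\<in>S. mix s G y) \<le> 1"
proof -
  interpret prob_space G by (rule prob_space_param_dist)
  have "(\<integral>\<theta>. (\<Sum>y\<in>S. fdens s \<theta> y) \<partial>G) \<le> (\<integral>\<theta>. 1 \<partial>G)"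
  proof (rule integral_mono_AE)
    show "integrable G (\<lambda>\<theta>. \<Sum>y\<in>S. fdens s \<theta> y)"
      by (intro Bochner_Integration.integrable_sum integrable_fdens)
    show "AE \<theta> in G. (\<Sum>y\<in>S. fdens s \<theta> y) \<le> 1"
      using AE_param_space by eventually_elim (rule sum_fdens_le_1[OF _ S])
  qed simp
  then show ?thesis by (simp add: sum_mix prob_space)
qed

lemma nn_integral_mix: "(\<integral>\<^sup>+y. ennreal (mix s G y) \<partial>count_space UNIV) = 1"
proof -
  interpret prob_space G by (rule prob_space_param_dist)
  have "(\<integral>\<^sup>+y. ennreal (mix s G y) \<partial>count_space UNIV)
      = (\<integral>\<^sup>+y. \<integral>\<^sup>+\<theta>. ennreal (fdens s \<theta> y) \<partial>G \<partial>count_space UNIV)"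
    unfolding mix_def
    by (intro nn_integral_cong nn_integral_eq_integral[symmetric] integrable_fdens)
       (use AE_param_space in eventually_elim, rule fdens_nonneg)
  also have "\<dots> = (\<integral>\<^sup>+\<theta>. \<integral>\<^sup>+y. ennreal (fdens s \<theta> y) \<partial>count_space UNIV \<partial>G)"
    using integrable_fdens
    by (intro nn_integral_count_space_nn_integral[symmetric]) auto
  also have "\<dots> = (\<integral>\<^sup>+\<theta>. 1 \<partial>G)"
    by (rule nn_integral_cong_AE) (use AE_param_space in eventually_elim, rule nn_integral_fdens)
  finally show ?thesis by (simp add: emeasure_space_1)
qed

definition mix_pmf :: "(nat \<times> nat) pmf" where
  "mix_pmf = embed_pmf (mix s G)"

lemma pmf_mix_pmf: "pmf mix_pmf y = mix s G y"
  unfolding mix_pmf_def by (rule pmf_embed_pmf) (use mix_nonneg nn_integral_mix in auto)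

lemma infsum_mix_compl:
  assumes S: "finite S"
  shows "infsum (mix s G) (- S) = 1 - (\<Sum>y\<in>S. mix s G y)"
proof -
  have "measure mix_pmf (- S) = infsum (pmf mix_pmf) (- S)"
    by (simp add: measure_pmf_conv_infsetsum infsetsum_infsum pmf_abs_summable)
  moreover have "pmf mix_pmf = mix s G"
    by (rule ext) (rule pmf_mix_pmf)
  ultimately have "infsum (mix s G) (- S) = measure mix_pmf (- S)"
    by simp
  also have "\<dots> = 1 - measure mix_pmf S"
    using measure_pmf.prob_compl[of S mix_pmf] by (simp add: Compl_eq_Diff_UNIV)
  finally show ?thesis by (simp add: measure_measure_pmf_finite[OF S] pmf_mix_pmf)
qed

lemma cond_mean_K0_integrals:
  defines "A \<equiv> \<integral>\<theta>. snd \<theta> * kdens s (fst \<theta>) 0 \<partial>G" and "B \<equiv> \<integral>\<theta>. kdens s (fst \<theta>) 0 \<partial>G"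
  shows "0 \<le> A" and "A \<le> B"
proof -
  have int_A: "integrable G (\<lambda>\<theta>. snd \<theta> * kdens s (fst \<theta>) 0)"
    using integrable_fdens_psi_oracle[of "(0, 0)"]
    by (simp add: fdens_def binom_dens_def psi_oracle_def mult.commute)
  have int_B: "integrable G (\<lambda>\<theta>. kdens s (fst \<theta>) 0)"
    using integrable_fdens[of "(0, 0)"] by (simp add: fdens_def binom_dens_def)
  have "AE \<theta> in G. 0 \<le> snd \<theta> * kdens s (fst \<theta>) 0 \<and> snd \<theta> * kdens s (fst \<theta>) 0 \<le> kdens s (fst \<theta>) 0"
    using AE_param_space
  proof eventually_elim
    case (elim \<theta>)
    then show ?case
      using param_space_snd[OF elim] kdens_nonneg[OF param_space_fst[OF elim], of 0]
      by (simp add: mult_left_le_one_le)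
  qed
  then show "0 \<le> A" "A \<le> B"
    unfolding A_def B_def
    by (auto intro!: integral_nonneg_AE integral_mono_AE[OF int_A int_B] elim: AE_mp)
qed

lemma cond_mean_K0_range: "0 \<le> cond_mean_K0 s G \<and> cond_mean_K0 s G \<le> 1"
  using cond_mean_K0_integrals unfolding cond_mean_K0_def
  by (cases "(\<integral>\<theta>. kdens s (fst \<theta>) 0 \<partial>G) = 0") (auto simp: divide_le_eq_1)

text \<open>At \<open>K = 0\<close> this holds because \<open>Psi_star\<close> is the posterior mean of \<open>p\<close> there.\<close>

lemma mix_mult_Psi_star: "mix s G y * Psi_star s G y = (\<integral>\<theta>. fdens s \<theta> y * psi_oracle (snd \<theta>) y \<partial>G)"
proof (cases "snd y > 0 \<or> fst y > snd y")
  case True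
  then show ?thesis by (auto simp: mix_def Psi_star_def psi_oracle_def fdens_eq_0)
next
  case False
  then have y: "y = (0, 0)" by (cases y) auto
  let ?A = "\<integral>\<theta>. snd \<theta> * kdens s (fst \<theta>) 0 \<partial>G" and ?B = "\<integral>\<theta>. kdens s (fst \<theta>) 0 \<partial>G"
  have "mix s G y * Psi_star s G y = ?B * (?A / ?B)"
    by (simp add: y mix_def Psi_star_def cond_mean_K0_def fdens_def binom_dens_def)
  also have "\<dots> = ?A"
    using cond_mean_K0_integrals by (cases "?B = 0") auto
  finally show ?thesis
    by (simp add: y fdens_def binom_dens_def psi_oracle_def mult.commute)
qed

lemma eta_hat_minus_sum_Psi_star_bounds:
  assumes S: "finite S"
  defines "D \<equiv> eta_hat G - (\<Sum>y\<in>S. mix s G y * Psi_star s G y)"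
  shows "0 \<le> D" and "D \<le> 1 - (\<Sum>y\<in>S. mix s G y)"
proof -
  interpret prob_space G by (rule prob_space_param_dist)
  let ?\<psi> = "\<lambda>\<theta>. \<Sum>y\<in>S. fdens s \<theta> y * psi_oracle (snd \<theta>) y"
  have int_\<psi>: "integrable G ?\<psi>"
    by (intro Bochner_Integration.integrable_sum integrable_fdens_psi_oracle)
  have int_f: "integrable G (\<lambda>\<theta>. \<Sum>y\<in>S. fdens s \<theta> y)"
    by (intro Bochner_Integration.integrable_sum integrable_fdens)
  have D: "D = (\<integral>\<theta>. snd \<theta> - ?\<psi> \<theta> \<partial>G)"
    unfolding D_def eta_hat_def mix_mult_Psi_star
    by (subst Bochner_Integration.integral_sum[symmetric], rule integrable_fdens_psi_oracle,
        rule Bochner_Integration.integral_diff[symmetric, OF integrable_snd int_\<psi>])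
  show "0 \<le> D"
    unfolding D by (rule integral_nonneg_AE)
      (use AE_param_space in \<open>eventually_elim, use sum_fdens_psi_oracle_le[OF _ S] in auto\<close>)
  have "(\<integral>\<theta>. snd \<theta> - ?\<psi> \<theta> \<partial>G) \<le> (\<integral>\<theta>. 1 - (\<Sum>y\<in>S. fdens s \<theta> y) \<partial>G)"
  proof (rule integral_mono_AE)
    show "AE \<theta> in G. snd \<theta> - ?\<psi> \<theta> \<le> 1 - (\<Sum>y\<in>S. fdens s \<theta> y)"
      using AE_param_space
    proof eventually_elim
      case (elim \<theta>)
      show ?case
        using sum_fdens_one_minus_psi_oracle_le[OF elim S] by (simp add: algebra_simps sum_subtractf)
    qed
  qed (use integrable_snd int_\<psi> int_f in simp_all)
  then show "D \<le> 1 - (\<Sum>y\<in>S. mix s G y)"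
    using int_f by (simp add: D sum_mix prob_space)
qed

lemma finite_mix_ge:
  assumes c: "c > 0"
  shows "finite {y. c \<le> mix s G y}"
proof (rule ccontr)
  assume "infinite {y. c \<le> mix s G y}"
  then obtain B where B: "finite B" "card B = nat \<lceil>1 / c\<rceil> + 1" "B \<subseteq> {y. c \<le> mix s G y}"
    using infinite_arbitrarily_large by blast
  have "real (card B) * c \<le> (\<Sum>y\<in>B. mix s G y)"
    using B(3) sum_mono[of B "\<lambda>_. c" "mix s G"] by auto
  also have "\<dots> \<le> 1" by (rule sum_mix_le_1[OF B(1)])
  finally have "real (card B) * c \<le> 1" .
  moreover have "real (card B) > 1 / c" using B(2) by linarith
  then have "real (card B) * c > 1" using c by (simp add: field_simps)
  ultimately show False by simp
qed

lemma sum_mix_support_eq_1: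
  assumes S: "finite S" and supp: "{y. mix s G y \<noteq> 0} \<subseteq> S"
  shows "(\<Sum>y\<in>S. mix s G y) = 1"
proof -
  have "infsum (mix s G) (- S) = 0"
    using supp by (intro infsum_0) auto
  then show ?thesis using infsum_mix_compl[OF S] by simp
qed

end

lemma mix_BinomS_eq_0: "\<kappa> < snd y \<Longrightarrow> mix (BinomS \<kappa>) G y = 0"
  by (simp add: mix_def fdens_def)

lemma support_mix_BinomS: "{y. mix (BinomS \<kappa>) G y \<noteq> 0} \<subseteq> {..\<kappa>}\<times>{..\<kappa>}"
proof
  fix y assume "y \<in> {y. mix (BinomS \<kappa>) G y \<noteq> 0}"
  then have "fst y \<le> snd y" "snd y \<le> \<kappa>"
    using fst_le_snd_if_mix_nonzero mix_BinomS_eq_0[of \<kappa> y G] by (auto simp: not_le[symmetric])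
  then show "y \<in> {..\<kappa>}\<times>{..\<kappa>}" by (cases y) auto
qed

section \<open>Cell counts of an i.i.d. sample\<close>

lemma replicate_pmf_Suc_pair:
  "replicate_pmf (Suc n) Q = map_pmf (\<lambda>(x, xs). x # xs) (pair_pmf Q (replicate_pmf n Q))"
  by (simp add: pair_pmf_def map_bind_pmf bind_assoc_pmf bind_return_pmf)

lemma pmf_replicate_pmf:
  "pmf (replicate_pmf n Q) zs = (if length zs = n then prod_list (map (pmf Q) zs) else 0)"
proof (induction n arbitrary: zs)
  case 0
  then show ?case by (auto simp: indicator_def)
next
  case (Suc n)
  have inj: "inj (\<lambda>(x :: 'a, xs). x # xs)" by (auto simp: inj_def)
  show ?case
  proof (cases zs)
    case Nil
    then show ?thesis by (simp add: pmf_eq_0_set_pmf set_replicate_pmf del: replicate_pmf.simps)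
  next
    case (Cons z zs')
    have "pmf (replicate_pmf (Suc n) Q) zs = pmf (pair_pmf Q (replicate_pmf n Q)) (z, zs')"
      unfolding replicate_pmf_Suc_pair Cons using pmf_map_inj'[OF inj, of _ "(z, zs')"] by simp
    then show ?thesis by (simp add: pmf_pair Suc.IH Cons)
  qed
qed

lemma nn_integral_replicate_pmf_Suc:
  "(\<integral>\<^sup>+zs. f zs \<partial>replicate_pmf (Suc n) Q) = (\<integral>\<^sup>+x. \<integral>\<^sup>+xs. f (x # xs) \<partial>replicate_pmf n Q \<partial>Q)"
  by simp

lemma emeasure_replicate_pmf_lists: "emeasure (replicate_pmf n Q) {zs. set zs \<subseteq> S} = emeasure Q S ^ n"
proof (induction n)
  case (Suc n)
  have "(\<integral>\<^sup>+xs. indicator {zs. set zs \<subseteq> S} (x # xs) \<partial>replicate_pmf n Q) = emeasure Q S ^ n * indicator S x"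
    for x
  proof -
    have "(\<integral>\<^sup>+xs. indicator {zs. set zs \<subseteq> S} (x # xs) \<partial>replicate_pmf n Q)
        = (\<integral>\<^sup>+xs. indicator S x * indicator {zs. set zs \<subseteq> S} xs \<partial>replicate_pmf n Q)"
      by (intro nn_integral_cong) (simp split: split_indicator)
    then show ?thesis by (simp add: nn_integral_cmult Suc.IH mult.commute)
  qed
  then have "(\<integral>\<^sup>+zs. indicator {zs. set zs \<subseteq> S} zs \<partial>replicate_pmf (Suc n) Q) = emeasure Q S ^ n * emeasure Q S"
    by (simp only: nn_integral_replicate_pmf_Suc) (simp add: nn_integral_cmult_indicator)
  then show ?case by (simp add: mult.commute)
qed simp

lemma measure_replicate_pmf_lists: "measure (replicate_pmf n Q) {zs. set zs \<subseteq> S} = measure Q S ^ n"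
  using emeasure_replicate_pmf_lists[of n Q S]
  by (simp add: measure_pmf.emeasure_eq_measure ennreal_power)

lemma measure_replicate_pmf_not_lists: "measure (replicate_pmf n Q) {zs. \<not> set zs \<subseteq> S} \<le> real n * (1 - measure Q S)"
proof -
  have "measure (replicate_pmf n Q) {zs. \<not> set zs \<subseteq> S} = 1 - measure Q S ^ n"
    using measure_pmf.prob_compl[of "{zs. set zs \<subseteq> S}" "replicate_pmf n Q"] measure_replicate_pmf_lists[of n Q S]
    by (simp add: Compl_eq_Diff_UNIV[symmetric] Collect_neg_eq)
  also have "\<dots> \<le> real n * (1 - measure Q S)"
  proof -
    have "1 + real n * (measure Q S - 1) \<le> (1 + (measure Q S - 1)) ^ n"
      by (rule Bernoulli_inequality) simp
    moreover have "real n * (measure Q S - 1) = - (real n * (1 - measure Q S))" by (simp add: algebra_simps)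
    ultimately show ?thesis by simp
  qed
  finally show ?thesis .
qed

lemma nn_integral_count_list:
  "(\<integral>\<^sup>+xs. ennreal (real (count_list xs y)) \<partial>replicate_pmf n Q) = ennreal (real n * pmf Q y)"
proof (induction n)
  case (Suc n)
  have "(\<integral>\<^sup>+xs. ennreal (real (count_list (x # xs) y)) \<partial>replicate_pmf n Q)
      = indicator {y} x + ennreal (real n * pmf Q y)" for x
    by (simp add: nn_integral_add measure_pmf.emeasure_space_1 Suc.IH split: split_indicator)
  then have "(\<integral>\<^sup>+xs. ennreal (real (count_list xs y)) \<partial>replicate_pmf (Suc n) Q)
      = ennreal (pmf Q y) + ennreal (real n * pmf Q y)"
    by (simp only: nn_integral_replicate_pmf_Suc)
       (simp add: nn_integral_add measure_pmf.emeasure_space_1 emeasure_pmf_single)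
  then show ?case
    by (simp add: algebra_simps ennreal_plus[symmetric] del: ennreal_plus)
qed simp

lemma nn_integral_count_list_square:
  "(\<integral>\<^sup>+xs. ennreal ((real (count_list xs y))\<^sup>2) \<partial>replicate_pmf n Q)
     = ennreal (real n * pmf Q y + real n * (real n - 1) * (pmf Q y)\<^sup>2)"
proof (induction n)
  case (Suc n)
  let ?q = "pmf Q y"
  have "(\<integral>\<^sup>+xs. ennreal ((real (count_list (x # xs) y))\<^sup>2) \<partial>replicate_pmf n Q)
      = ennreal (1 + 2 * (real n * ?q)) * indicator {y} x + ennreal (real n * ?q + real n * (real n - 1) * ?q\<^sup>2)"
    for x
  proof (cases "x = y")
    case True
    have "(\<integral>\<^sup>+xs. ennreal ((real (count_list (x # xs) y))\<^sup>2) \<partial>replicate_pmf n Q)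
        = (\<integral>\<^sup>+xs. 1 + ennreal 2 * ennreal (real (count_list xs y)) + ennreal ((real (count_list xs y))\<^sup>2)
             \<partial>replicate_pmf n Q)"
      using True by (intro nn_integral_cong) (simp add: power2_eq_square algebra_simps ennreal_mult)
    also have "\<dots> = 1 + ennreal 2 * ennreal (real n * ?q) + ennreal (real n * ?q + real n * (real n - 1) * ?q\<^sup>2)"
      by (simp add: nn_integral_add nn_integral_cmult measure_pmf.emeasure_space_1 Suc.IH nn_integral_count_list
          del: ennreal_plus)
    finally show ?thesis using True by (simp add: ennreal_mult)
  qed (simp add: Suc.IH)
  then have "(\<integral>\<^sup>+xs. ennreal ((real (count_list xs y))\<^sup>2) \<partial>replicate_pmf (Suc n) Q)
      = ennreal (1 + 2 * (real n * ?q)) * ennreal ?q + ennreal (real n * ?q + real n * (real n - 1) * ?q\<^sup>2)"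
    by (simp only: nn_integral_replicate_pmf_Suc)
       (simp add: nn_integral_add nn_integral_cmult_indicator measure_pmf.emeasure_space_1 emeasure_pmf_single
        del: ennreal_plus)
  also have "\<dots> = ennreal (real (Suc n) * ?q + real (Suc n) * (real (Suc n) - 1) * ?q\<^sup>2)"
    by (cases n) (simp_all add: ennreal_mult'[symmetric] ennreal_plus[symmetric] algebra_simps power2_eq_square del: ennreal_plus)
  finally show ?case .
qed simp

lemma nn_integral_centered_square:
  fixes c :: "'a \<Rightarrow> real" and M :: "'a pmf"
  assumes c: "\<And>x. 0 \<le> c x" and m: "0 \<le> m" and v: "0 \<le> v"
    and mean: "(\<integral>\<^sup>+x. ennreal (c x) \<partial>M) = ennreal m"
    and second: "(\<integral>\<^sup>+x. ennreal ((c x)\<^sup>2) \<partial>M) = ennreal (v + m\<^sup>2)"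
  shows "(\<integral>\<^sup>+x. ennreal ((c x - m)\<^sup>2) \<partial>M) = ennreal v"
proof -
  have pointwise: "ennreal ((c x - m)\<^sup>2) + ennreal (2 * m) * ennreal (c x) = ennreal ((c x)\<^sup>2) + ennreal (m\<^sup>2)"
    for x
  proof -
    have "(c x - m)\<^sup>2 + 2 * m * c x = (c x)\<^sup>2 + m\<^sup>2"
      by (simp add: power2_eq_square algebra_simps)
    then show ?thesis
      using c[of x] m by (simp add: ennreal_mult'[symmetric] ennreal_plus[symmetric] del: ennreal_plus)
  qed
  have "(\<integral>\<^sup>+x. ennreal ((c x - m)\<^sup>2) \<partial>M) + ennreal (m\<^sup>2) + ennreal (m\<^sup>2)
      = (\<integral>\<^sup>+x. ennreal ((c x - m)\<^sup>2) \<partial>M) + ennreal (2 * m) * ennreal m"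
    using m by (simp add: add.assoc power2_eq_square ennreal_mult'[symmetric]
        ennreal_plus[symmetric] del: ennreal_plus)
  also have "\<dots> = (\<integral>\<^sup>+x. ennreal ((c x - m)\<^sup>2) + ennreal (2 * m) * ennreal (c x) \<partial>M)"
    by (subst nn_integral_add) (auto simp: nn_integral_cmult mean)
  also have "\<dots> = (\<integral>\<^sup>+x. ennreal ((c x)\<^sup>2) + ennreal (m\<^sup>2) \<partial>M)"
    by (simp only: pointwise)
  also have "\<dots> = ennreal (v + m\<^sup>2) + ennreal (m\<^sup>2)"
    by (simp add: nn_integral_add second measure_pmf.emeasure_space_1 del: ennreal_plus)
  also have "\<dots> = ennreal v + ennreal (m\<^sup>2) + ennreal (m\<^sup>2)"
    using v by (simp add: ennreal_plus)
  finally show ?thesis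
    by simp
qed

lemma nn_integral_count_list_variance:
  "(\<integral>\<^sup>+xs. ennreal ((real (count_list xs y) - real n * pmf Q y)\<^sup>2) \<partial>replicate_pmf n Q)
     = ennreal (real n * pmf Q y * (1 - pmf Q y))"
proof (rule nn_integral_centered_square)
  show "(\<integral>\<^sup>+xs. ennreal ((real (count_list xs y))\<^sup>2) \<partial>replicate_pmf n Q)
      = ennreal (real n * pmf Q y * (1 - pmf Q y) + (real n * pmf Q y)\<^sup>2)"
    unfolding nn_integral_count_list_square
    by (rule arg_cong[where f = ennreal]) (simp add: power2_eq_square algebra_simps)
qed (auto simp: nn_integral_count_list pmf_le_1)

definition chi_square :: "'a set \<Rightarrow> 'a pmf \<Rightarrow> nat \<Rightarrow> 'a list \<Rightarrow> real" where
  "chi_square S Q n xs = (\<Sum>y\<in>S. (real (count_list xs y) - real n * pmf Q y) ^ 2 / (real n ^ 2 * pmf Q y))"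

lemma nn_integral_chi_square_le:
  assumes S: "finite S" and n: "n > 0" and pos: "\<And>y. y \<in> S \<Longrightarrow> pmf Q y > 0"
  shows "(\<integral>\<^sup>+xs. ennreal (chi_square S Q n xs) \<partial>replicate_pmf n Q) \<le> ennreal (real (card S) / real n)"
proof -
  let ?L = "replicate_pmf n Q" and ?q = "pmf Q"
  let ?V = "\<lambda>xs y. (real (count_list xs y) - real n * ?q y)\<^sup>2"
  have "(\<integral>\<^sup>+xs. ennreal (chi_square S Q n xs) \<partial>?L)
      = (\<integral>\<^sup>+xs. (\<Sum>y\<in>S. ennreal (?V xs y / ((real n)\<^sup>2 * ?q y))) \<partial>?L)"
    unfolding chi_square_def
    by (intro nn_integral_cong sum_ennreal[symmetric]) (auto intro!: divide_nonneg_nonneg)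
  also have "\<dots> = (\<Sum>y\<in>S. \<integral>\<^sup>+xs. ennreal (?V xs y / ((real n)\<^sup>2 * ?q y)) \<partial>?L)"
    by (rule nn_integral_sum) auto
  also have "\<dots> = (\<Sum>y\<in>S. ennreal ((1 - ?q y) / real n))"
  proof (rule sum.cong[OF refl])
    fix y assume y: "y \<in> S"
    have "(\<integral>\<^sup>+xs. ennreal (?V xs y / ((real n)\<^sup>2 * ?q y)) \<partial>?L)
        = (\<integral>\<^sup>+xs. ennreal (1 / ((real n)\<^sup>2 * ?q y)) * ennreal (?V xs y) \<partial>?L)"
      by (rule nn_integral_cong) (simp add: ennreal_mult'[symmetric])
    also have "\<dots> = ennreal (1 / ((real n)\<^sup>2 * ?q y)) * ennreal (real n * ?q y * (1 - ?q y))"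
      by (subst nn_integral_cmult) (auto simp: nn_integral_count_list_variance)
    also have "\<dots> = ennreal ((1 - ?q y) / real n)"
    proof -
      have "1 / ((real n)\<^sup>2 * ?q y) * (real n * ?q y * (1 - ?q y)) = (1 - ?q y) / real n"
        using pos[OF y] n by (simp add: power2_eq_square field_simps)
      then show ?thesis by (simp add: ennreal_mult'[symmetric])
    qed
    finally show "(\<integral>\<^sup>+xs. ennreal (?V xs y / ((real n)\<^sup>2 * ?q y)) \<partial>?L) = ennreal ((1 - ?q y) / real n)" .
  qed
  also have "\<dots> \<le> (\<Sum>y\<in>S. ennreal (1 / real n))"
    by (intro sum_mono ennreal_leI divide_right_mono) auto
  also have "\<dots> = ennreal (real (card S) / real n)"
    by (simp add: ennreal_of_nat_eq_real_of_nat ennreal_mult'[symmetric])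
  finally show ?thesis .
qed

lemma measure_chi_square_gt_le:
  assumes S: "finite S" and n: "n > 0" and pos: "\<And>y. y \<in> S \<Longrightarrow> pmf Q y > 0" and u: "u > 0"
  shows "measure (replicate_pmf n Q) {xs. u < chi_square S Q n xs} \<le> real (card S) / (real n * u)"
proof -
  let ?L = "replicate_pmf n Q" and ?A = "{xs. u < chi_square S Q n xs}"
  have "ennreal u * emeasure ?L ?A = (\<integral>\<^sup>+xs. ennreal u * indicator ?A xs \<partial>?L)"
    by (simp add: nn_integral_cmult_indicator)
  also have "\<dots> \<le> (\<integral>\<^sup>+xs. ennreal (chi_square S Q n xs) \<partial>?L)"
    by (rule nn_integral_mono) (auto simp: indicator_def intro!: ennreal_leI)
  also have "\<dots> \<le> ennreal (real (card S) / real n)" by (rule nn_integral_chi_square_le[OF S n pos])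
  finally have "ennreal (u * measure ?L ?A) \<le> ennreal (real (card S) / real n)"
    using u by (simp add: measure_pmf.emeasure_eq_measure ennreal_mult'[symmetric])
  then have "u * measure ?L ?A \<le> real (card S) / real n"
    by (subst (asm) ennreal_le_iff) auto
  then show ?thesis using u n by (simp add: field_simps)
qed

section \<open>A Hellinger-distance estimate\<close>

text \<open>
  In the applications \<open>a = \<surd>f\<close>, \<open>b = \<surd>g\<close> and \<open>e\<close> is the empirical mass function; the
  hypothesis \<open>score\<close> is the first-order consequence of the likelihood inequality.
\<close>

lemma hellinger_sq_plus_defect_le:
  fixes a b e :: "'a \<Rightarrow> real"
  assumes S: "finite S" and a: "\<And>y. y \<in> S \<Longrightarrow> a y > 0"
    and sum_a: "(\<Sum>y\<in>S. (a y)\<^sup>2) = 1 - t"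
    and score: "0 \<le> (\<Sum>y\<in>S. e y * (b y / a y - 1))"
  defines "H \<equiv> L2_set (\<lambda>y. b y - a y) S" and "c \<equiv> L2_set (\<lambda>y. (e y - (a y)\<^sup>2) / a y) S"
  shows "H\<^sup>2 + (1 - (\<Sum>y\<in>S. (b y)\<^sup>2)) \<le> 2 * c * H + t"
proof -
  have "(\<Sum>y\<in>S. e y * (b y / a y - 1))
      = (\<Sum>y\<in>S. ((b y)\<^sup>2 - (a y)\<^sup>2) / 2 - (b y - a y)\<^sup>2 / 2) + (\<Sum>y\<in>S. (e y - (a y)\<^sup>2) / a y * (b y - a y))"
    unfolding sum.distrib[symmetric]
  proof (rule sum.cong[OF refl])
    fix y assume "y \<in> S"
    with a[of y] show "e y * (b y / a y - 1)
        = ((b y)\<^sup>2 - (a y)\<^sup>2) / 2 - (b y - a y)\<^sup>2 / 2 + (e y - (a y)\<^sup>2) / a y * (b y - a y)"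
      by (simp add: field_simps power2_eq_square)
  qed
  also have "(\<Sum>y\<in>S. ((b y)\<^sup>2 - (a y)\<^sup>2) / 2 - (b y - a y)\<^sup>2 / 2)
      = ((\<Sum>y\<in>S. (b y)\<^sup>2) - (1 - t)) / 2 - H\<^sup>2 / 2"
    by (simp add: H_def L2_set_def sum_nonneg sum_subtractf sum_divide_distrib[symmetric] sum_a)
  also have "(\<Sum>y\<in>S. (e y - (a y)\<^sup>2) / a y * (b y - a y)) \<le> c * H"
    unfolding c_def H_def
    by (rule order_trans[OF sum_mono L2_set_mult_ineq]) (metis abs_ge_self abs_mult)
  finally show ?thesis using score by (simp add: field_simps)
qed

lemma sum_abs_diff_le_L2_set:
  fixes a e :: "'a \<Rightarrow> real"
  assumes a: "\<And>y. y \<in> S \<Longrightarrow> a y > 0" and sum_a: "(\<Sum>y\<in>S. (a y)\<^sup>2) \<le> 1"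
  shows "(\<Sum>y\<in>S. \<bar>e y - (a y)\<^sup>2\<bar>) \<le> L2_set (\<lambda>y. (e y - (a y)\<^sup>2) / a y) S"
proof -
  have "(\<Sum>y\<in>S. \<bar>e y - (a y)\<^sup>2\<bar>) = (\<Sum>y\<in>S. \<bar>(e y - (a y)\<^sup>2) / a y\<bar> * \<bar>a y\<bar>)"
  proof (rule sum.cong[OF refl])
    fix y assume "y \<in> S"
    with a[of y] show "\<bar>e y - (a y)\<^sup>2\<bar> = \<bar>(e y - (a y)\<^sup>2) / a y\<bar> * \<bar>a y\<bar>"
      by (simp add: abs_divide)
  qed
  also have "\<dots> \<le> L2_set (\<lambda>y. (e y - (a y)\<^sup>2) / a y) S * L2_set a S"
    by (rule L2_set_mult_ineq)
  also have "\<dots> \<le> L2_set (\<lambda>y. (e y - (a y)\<^sup>2) / a y) S * 1"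
    using sum_a by (intro mult_left_mono L2_set_nonneg) (simp add: L2_set_def)
  finally show ?thesis by simp
qed

lemma sum_abs_diff_squares_le_L2_set:
  fixes a b :: "'a \<Rightarrow> real"
  assumes sum_a: "(\<Sum>y\<in>S. (a y)\<^sup>2) \<le> 1" and sum_b: "(\<Sum>y\<in>S. (b y)\<^sup>2) \<le> 1"
  shows "(\<Sum>y\<in>S. \<bar>(a y)\<^sup>2 - (b y)\<^sup>2\<bar>) \<le> 2 * L2_set (\<lambda>y. b y - a y) S"
proof -
  have "(\<Sum>y\<in>S. \<bar>(a y)\<^sup>2 - (b y)\<^sup>2\<bar>) = (\<Sum>y\<in>S. \<bar>b y - a y\<bar> * \<bar>a y + b y\<bar>)"
    by (rule sum.cong) (auto simp: abs_mult[symmetric] power2_eq_square algebra_simps abs_minus_commute)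
  also have "\<dots> \<le> L2_set (\<lambda>y. b y - a y) S * L2_set (\<lambda>y. a y + b y) S"
    by (rule L2_set_mult_ineq)
  also have "\<dots> \<le> L2_set (\<lambda>y. b y - a y) S * 2"
  proof (rule mult_left_mono[OF _ L2_set_nonneg])
    have "(\<Sum>y\<in>S. (a y + b y)\<^sup>2) \<le> (\<Sum>y\<in>S. 2 * (a y)\<^sup>2 + 2 * (b y)\<^sup>2)"
    proof (rule sum_mono)
      fix y
      have "0 \<le> (a y - b y)\<^sup>2" by simp
      then show "(a y + b y)\<^sup>2 \<le> 2 * (a y)\<^sup>2 + 2 * (b y)\<^sup>2"
        by (simp add: power2_eq_square algebra_simps)
    qed
    also have "\<dots> \<le> 2\<^sup>2"
      using sum_a sum_b by (simp add: sum.distrib sum_distrib_left[symmetric])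
    finally show "L2_set (\<lambda>y. a y + b y) S \<le> 2"
      unfolding L2_set_def using real_sqrt_le_mono by fastforce
  qed
  finally show ?thesis by simp
qed

lemma le_of_square_le:
  fixes H c t :: real
  assumes "0 \<le> H" "0 \<le> c" "0 \<le> t" "H\<^sup>2 \<le> 2 * c * H + t"
  shows "H \<le> 2 * c + sqrt t"
proof (rule ccontr)
  assume "\<not> ?thesis"
  then have gt: "H > 2 * c + sqrt t" by simp
  have "sqrt t * H \<ge> sqrt t * sqrt t"
    using gt assms by (intro mult_left_mono) auto
  then have "sqrt t * H \<ge> t"
    using assms by simp
  moreover have "H * H > H * (2 * c + sqrt t)"
    using gt assms by (intro mult_strict_left_mono) (auto intro: order.strict_trans1[OF _ gt])
  ultimately show False
    using assms(4) by (simp add: power2_eq_square algebra_simps)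
qed

definition error_bound :: "real \<Rightarrow> real \<Rightarrow> real" where
  "error_bound X t = 5 * sqrt X + 4 * X + 2 * sqrt t + 2 * sqrt X * sqrt t + t"

lemma l1_dist_plus_defect_le_error_bound:
  fixes a b e :: "'a \<Rightarrow> real"
  assumes S: "finite S" and a: "\<And>y. y \<in> S \<Longrightarrow> a y > 0"
    and sum_a: "(\<Sum>y\<in>S. (a y)\<^sup>2) = 1 - t" and t: "0 \<le> t"
    and sum_b: "(\<Sum>y\<in>S. (b y)\<^sup>2) \<le> 1"
    and score: "0 \<le> (\<Sum>y\<in>S. e y * (b y / a y - 1))"
  shows "(\<Sum>y\<in>S. \<bar>e y - (b y)\<^sup>2\<bar>) + (1 - (\<Sum>y\<in>S. (b y)\<^sup>2))
           \<le> error_bound (\<Sum>y\<in>S. (e y - (a y)\<^sup>2)\<^sup>2 / (a y)\<^sup>2) t"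
proof -
  define H where "H = L2_set (\<lambda>y. b y - a y) S"
  define c where "c = L2_set (\<lambda>y. (e y - (a y)\<^sup>2) / a y) S"
  have c: "c = sqrt (\<Sum>y\<in>S. (e y - (a y)\<^sup>2)\<^sup>2 / (a y)\<^sup>2)"
    by (simp add: c_def L2_set_def power_divide)
  have H0: "0 \<le> H" and c0: "0 \<le> c"
    by (simp_all add: H_def c_def L2_set_nonneg)
  have hellinger: "H\<^sup>2 + (1 - (\<Sum>y\<in>S. (b y)\<^sup>2)) \<le> 2 * c * H + t"
    unfolding H_def c_def by (rule hellinger_sq_plus_defect_le[OF S a sum_a score])
  then have H: "H \<le> 2 * c + sqrt t"
    using sum_b by (intro le_of_square_le H0 c0 t) linarith
  have "(\<Sum>y\<in>S. \<bar>e y - (b y)\<^sup>2\<bar>) \<le> (\<Sum>y\<in>S. \<bar>e y - (a y)\<^sup>2\<bar> + \<bar>(a y)\<^sup>2 - (b y)\<^sup>2\<bar>)"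
    by (rule sum_mono) simp
  also have "\<dots> \<le> c + 2 * H"
  proof -
    have "(\<Sum>y\<in>S. \<bar>e y - (a y)\<^sup>2\<bar>) \<le> c"
      unfolding c_def using a sum_a t by (intro sum_abs_diff_le_L2_set) auto
    moreover have "(\<Sum>y\<in>S. \<bar>(a y)\<^sup>2 - (b y)\<^sup>2\<bar>) \<le> 2 * H"
      unfolding H_def using sum_a sum_b t by (intro sum_abs_diff_squares_le_L2_set) auto
    ultimately show ?thesis by (simp add: sum.distrib)
  qed
  finally have "(\<Sum>y\<in>S. \<bar>e y - (b y)\<^sup>2\<bar>) + (1 - (\<Sum>y\<in>S. (b y)\<^sup>2)) \<le> c + 2 * H + 2 * c * H + t"
    using hellinger by (smt (verit) zero_le_power2)
  also have "\<dots> \<le> c + 2 * (2 * c + sqrt t) + 2 * c * (2 * c + sqrt t) + t"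
    using H c0 by (intro add_mono mult_left_mono order.refl) auto
  also have "\<dots> = 5 * c + 4 * (c * c) + 2 * sqrt t + 2 * c * sqrt t + t"
    by (simp add: algebra_simps)
  also have "\<dots> = error_bound (\<Sum>y\<in>S. (e y - (a y)\<^sup>2)\<^sup>2 / (a y)\<^sup>2) t"
    unfolding error_bound_def c by (simp add: sum_nonneg)
  finally show ?thesis .
qed

section \<open>The estimation error when all data lie in a finite set\<close>

lemma prod_list_map_eq_prod_count:
  assumes "set xs \<subseteq> S" "finite S"
  shows "prod_list (map h xs) = (\<Prod>y\<in>S. h y ^ count_list xs y)"
  using assms(1)
proof (induction xs)
  case Nil then show ?case by simp
next
  case (Cons x xs)
  have x: "x \<in> S" using Cons.prems by simp
  have "(\<Prod>y\<in>S. h y ^ count_list (x#xs) y) = (\<Prod>y\<in>S. (if x = y then h y else 1) * h y ^ count_list xs y)"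
    by (rule prod.cong) auto
  also have "\<dots> = (\<Prod>y\<in>S. (if x = y then h y else 1)) * (\<Prod>y\<in>S. h y ^ count_list xs y)"
    by (rule prod.distrib)
  also have "(\<Prod>y\<in>S. (if x = y then h y else 1)) = h x"
    using x assms(2) by (simp add: prod.delta)
  finally show ?case using Cons by simp
qed

lemma ln_le_two_sqrt_minus_two: "r > 0 \<Longrightarrow> ln r \<le> 2 * sqrt r - 2"
  using ln_le_minus_one[of "sqrt r"] by (simp add: ln_sqrt)

text \<open>From \<open>ln r \<le> 2(\<surd>r - 1)\<close>, applied to the likelihood ratio cell by cell.\<close>

lemma sqrt_ratio_score_nonneg:
  fixes f g :: "'a \<Rightarrow> real"
  assumes S: "finite S" and sub: "set ys \<subseteq> S" and f: "\<And>y. y \<in> S \<Longrightarrow> f y > 0"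
    and g: "\<And>y. g y \<ge> 0"
    and lik: "prod_list (map f ys) \<le> prod_list (map g ys)"
  shows "0 \<le> (\<Sum>y\<in>S. real (count_list ys y) * (sqrt (g y) / sqrt (f y) - 1))"
proof -
  let ?c = "count_list ys"
  have prod_f: "(\<Prod>y\<in>S. f y ^ ?c y) > 0"
    using f by (intro prod_pos) auto
  have lik': "(\<Prod>y\<in>S. f y ^ ?c y) \<le> (\<Prod>y\<in>S. g y ^ ?c y)"
    using lik by (simp add: prod_list_map_eq_prod_count[OF sub S])
  have g_pos: "g y > 0" if "y \<in> S" "?c y > 0" for y
  proof (rule ccontr)
    assume "\<not> g y > 0"
    then have "(\<Prod>y\<in>S. g y ^ ?c y) = 0"
      using g[of y] that S by (intro prod_zero) (auto intro!: bexI[of _ y])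
    with prod_f lik' show False by simp
  qed
  have "0 \<le> ln ((\<Prod>y\<in>S. g y ^ ?c y) / (\<Prod>y\<in>S. f y ^ ?c y))"
    using prod_f lik' by simp
  also have "\<dots> = (\<Sum>y\<in>S. real (?c y) * ln (g y / f y))"
  proof -
    have "(\<Prod>y\<in>S. g y ^ ?c y) / (\<Prod>y\<in>S. f y ^ ?c y) = (\<Prod>y\<in>S. (g y / f y) ^ ?c y)"
      by (simp add: prod_dividef power_divide)
    moreover have "(g y / f y) ^ ?c y \<noteq> 0" if "y \<in> S" for y
      using g_pos[OF that] f[OF that] by (cases "?c y = 0") auto
    ultimately show ?thesis
      by (simp add: ln_prod[OF S] ln_realpow)
  qed
  also have "\<dots> \<le> (\<Sum>y\<in>S. real (?c y) * (2 * sqrt (g y / f y) - 2))"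
  proof (rule sum_mono)
    fix y assume y: "y \<in> S"
    show "real (?c y) * ln (g y / f y) \<le> real (?c y) * (2 * sqrt (g y / f y) - 2)"
      using g_pos[OF y] f[OF y] by (cases "?c y = 0") (auto intro!: mult_left_mono ln_le_two_sqrt_minus_two)
  qed
  also have "\<dots> = 2 * (\<Sum>y\<in>S. real (?c y) * (sqrt (g y) / sqrt (f y) - 1))"
    by (simp add: sum_distrib_left real_sqrt_divide algebra_simps)
  finally show ?thesis by simp
qed

lemma sum_list_map_eq_sum_count_real:
  assumes "set xs \<subseteq> X" "finite X"
  shows "sum_list (map f xs) = (\<Sum>x\<in>X. real (count_list xs x) * (f x :: real))"
  using assms(1)
proof (induction xs)
  case Nil
  then show ?case by simp
next
  case (Cons z xs)
  then have z: "z \<in> X" by simp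
  have "(\<Sum>x\<in>X. real (count_list (z # xs) x) * f x)
      = (\<Sum>x\<in>X. (if z = x then f x else 0) + real (count_list xs x) * f x)"
    by (rule sum.cong) (auto simp: algebra_simps)
  also have "\<dots> = f z + (\<Sum>x\<in>X. real (count_list xs x) * f x)"
    using z assms(2) by (simp add: sum.distrib)
  finally show ?case using Cons by simp
qed

lemma Psi_star_range:
  assumes "is_param_dist s Gh" "fst y \<le> snd y"
  shows "0 \<le> Psi_star s Gh y \<and> Psi_star s Gh y \<le> 1"
  using assms cond_mean_K0_range[of s Gh] by (auto simp: Psi_star_def)

lemma eta_tilde_minus_eta_hat_le:
  assumes Gh: "is_param_dist s Gh" and S: "finite S" and sub: "set ys \<subseteq> S"
    and le: "\<And>y. y \<in> S \<Longrightarrow> fst y \<le> snd y"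
  defines "e \<equiv> \<lambda>y. real (count_list ys y) / real (length ys)"
  shows "\<bar>eta_tilde s Gh ys - eta_hat Gh\<bar>
           \<le> (\<Sum>y\<in>S. \<bar>e y - mix s Gh y\<bar>) + (1 - (\<Sum>y\<in>S. mix s Gh y))"
proof -
  let ?g = "mix s Gh" and ?\<Psi> = "Psi_star s Gh"
  have "eta_tilde s Gh ys = (\<Sum>y\<in>S. e y * ?\<Psi> y)"
    using sum_list_map_eq_sum_count_real[OF sub S, of ?\<Psi>]
    by (simp add: eta_tilde_def e_def sum_divide_distrib)
  then have diff: "eta_tilde s Gh ys - eta_hat Gh
      = (\<Sum>y\<in>S. (e y - ?g y) * ?\<Psi> y) - (eta_hat Gh - (\<Sum>y\<in>S. ?g y * ?\<Psi> y))"
    by (simp add: algebra_simps sum_subtractf)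
  have "\<bar>\<Sum>y\<in>S. (e y - ?g y) * ?\<Psi> y\<bar> \<le> (\<Sum>y\<in>S. \<bar>e y - ?g y\<bar>)"
  proof (rule order_trans[OF sum_abs sum_mono])
    fix y assume "y \<in> S"
    then show "\<bar>(e y - ?g y) * ?\<Psi> y\<bar> \<le> \<bar>e y - ?g y\<bar>"
      using Psi_star_range[OF Gh le] by (simp add: abs_mult mult_left_le)
  qed
  then show ?thesis
    using diff eta_hat_minus_sum_Psi_star_bounds[OF Gh S] by linarith
qed

lemma eta_tilde_minus_eta_hat_le_error_bound:
  assumes G: "is_param_dist s G" and Gh: "is_GMLE s ys Gh" and S: "finite S"
    and sub: "set ys \<subseteq> S" and ne: "ys \<noteq> []" and pos: "\<And>y. y \<in> S \<Longrightarrow> mix s G y > 0"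
  shows "\<bar>eta_tilde s Gh ys - eta_hat Gh\<bar>
           \<le> error_bound (chi_square S (mix_pmf s G) (length ys) ys) (1 - (\<Sum>y\<in>S. mix s G y))"
proof -
  define n where "n = length ys"
  have n: "n > 0" using ne by (simp add: n_def)
  define e where "e y = real (count_list ys y) / real n" for y
  define f where "f = mix s G"
  define g where "g = mix s Gh"
  have Gh_dist: "is_param_dist s Gh" using Gh by (simp add: is_GMLE_def)
  have g_nonneg: "g y \<ge> 0" for y unfolding g_def by (rule mix_nonneg[OF Gh_dist])
  have f_pos: "y \<in> S \<Longrightarrow> f y > 0" for y using pos by (simp add: f_def)
  have sqrt_f: "(sqrt (f y))\<^sup>2 = f y" if "y \<in> S" for y using f_pos[OF that] by simp
  have sqrt_g: "(sqrt (g y))\<^sup>2 = g y" for y using g_nonneg[of y] by simp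
  have "lik s G ys \<le> lik s Gh ys"
    using Gh G by (simp add: is_GMLE_def)
  then have lik_fg: "prod_list (map f ys) \<le> prod_list (map g ys)"
    by (simp add: lik_def f_def g_def)
  have "0 \<le> (\<Sum>y\<in>S. real (count_list ys y) * (sqrt (g y) / sqrt (f y) - 1))"
    using sqrt_ratio_score_nonneg[where f = f and g = g, OF S sub f_pos g_nonneg lik_fg] .
  then have score: "0 \<le> (\<Sum>y\<in>S. e y * (sqrt (g y) / sqrt (f y) - 1))"
    by (simp add: e_def sum_divide_distrib[symmetric])
  have "(\<Sum>y\<in>S. \<bar>e y - (sqrt (g y))\<^sup>2\<bar>) + (1 - (\<Sum>y\<in>S. (sqrt (g y))\<^sup>2))
      \<le> error_bound (\<Sum>y\<in>S. (e y - (sqrt (f y))\<^sup>2)\<^sup>2 / (sqrt (f y))\<^sup>2) (1 - (\<Sum>y\<in>S. f y))"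
  proof (rule l1_dist_plus_defect_le_error_bound[OF S _ _ _ _ score])
    show "(\<Sum>y\<in>S. (sqrt (f y))\<^sup>2) = 1 - (1 - (\<Sum>y\<in>S. f y))" using sqrt_f by simp
    show "0 \<le> 1 - (\<Sum>y\<in>S. f y)" using sum_mix_le_1[OF G S] by (simp add: f_def)
    show "(\<Sum>y\<in>S. (sqrt (g y))\<^sup>2) \<le> 1" using sum_mix_le_1[OF Gh_dist S] sqrt_g by (simp add: g_def)
  qed (use f_pos in simp)
  also have "(\<Sum>y\<in>S. (e y - (sqrt (f y))\<^sup>2)\<^sup>2 / (sqrt (f y))\<^sup>2) = chi_square S (mix_pmf s G) n ys"
    unfolding chi_square_def
  proof (rule sum.cong[OF refl])
    fix y assume y: "y \<in> S"
    show "(e y - (sqrt (f y))\<^sup>2)\<^sup>2 / (sqrt (f y))\<^sup>2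
        = (real (count_list ys y) - real n * pmf (mix_pmf s G) y)\<^sup>2 / ((real n)\<^sup>2 * pmf (mix_pmf s G) y)"
      using f_pos[OF y] n unfolding pmf_mix_pmf[OF G] sqrt_f[OF y] e_def f_def
      by (simp add: field_simps power2_eq_square)
  qed
  finally have "(\<Sum>y\<in>S. \<bar>e y - g y\<bar>) + (1 - (\<Sum>y\<in>S. g y))
      \<le> error_bound (chi_square S (mix_pmf s G) n ys) (1 - (\<Sum>y\<in>S. f y))"
    by (simp only: sqrt_g)
  moreover have "\<bar>eta_tilde s Gh ys - eta_hat Gh\<bar> \<le> (\<Sum>y\<in>S. \<bar>e y - g y\<bar>) + (1 - (\<Sum>y\<in>S. g y))"
    unfolding e_def g_def n_def
    using pos fst_le_snd_if_mix_nonzero[of s G] by (intro eta_tilde_minus_eta_hat_le[OF Gh_dist S sub]) force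
  ultimately show ?thesis by (simp add: n_def f_def)
qed

section \<open>Rates in probability\<close>

lemma data_prob_eq_measure:
  assumes G: "is_param_dist s G"
  shows "data_prob s G n A = measure (replicate_pmf n (mix_pmf s G)) A"
proof -
  let ?L = "replicate_pmf n (mix_pmf s G)"
  have "measure ?L A = infsum (pmf ?L) A"
    by (simp add: measure_pmf_conv_infsetsum infsetsum_infsum pmf_abs_summable)
  also have "\<dots> = infsum (lik s G) {ys \<in> A. length ys = n}"
    by (rule infsum_cong_neutral)
       (auto simp: pmf_replicate_pmf lik_def pmf_mix_pmf[OF G] intro!: arg_cong[where f = prod_list])
  finally show ?thesis by (simp add: data_prob_def)
qed

lemma error_bound_mono: "0 \<le> X \<Longrightarrow> X \<le> u \<Longrightarrow> 0 \<le> t \<Longrightarrow> error_bound X t \<le> error_bound u t"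
  unfolding error_bound_def
  by (intro add_mono mult_left_mono mult_right_mono real_sqrt_le_mono order.refl) auto

lemma chi_square_nonneg: "(\<And>y. y \<in> S \<Longrightarrow> pmf Q y > 0) \<Longrightarrow> 0 \<le> chi_square S Q n xs"
  unfolding chi_square_def by (intro sum_nonneg divide_nonneg_nonneg) auto

text \<open>
  The error exceeds \<open>error_bound u \<tau>\<close> only if some observation falls outside \<open>S\<close> or the
  chi-square statistic exceeds \<open>u\<close>.
\<close>

lemma data_prob_error_gt_le:
  assumes G: "is_param_dist s G" and GMLE: "\<And>ys. is_GMLE s ys (Ghat ys)"
    and S: "finite S" and pos: "\<And>y. y \<in> S \<Longrightarrow> mix s G y > 0"
    and n: "n > 0" and u: "u > 0"
    and r: "error_bound u (1 - (\<Sum>y\<in>S. mix s G y)) \<le> r"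
  shows "data_prob s G n {ys. \<bar>eta_tilde s (Ghat ys) ys - eta_hat (Ghat ys)\<bar> > r}
          \<le> real n * (1 - (\<Sum>y\<in>S. mix s G y)) + real (card S) / (real n * u)"
proof -
  let ?Q = "mix_pmf s G" let ?L = "replicate_pmf n ?Q"
  let ?out = "{zs. \<not> set zs \<subseteq> S}" and ?chi = "{zs. u < chi_square S ?Q n zs}"
  have pos_Q: "y \<in> S \<Longrightarrow> pmf ?Q y > 0" for y using pos by (simp add: pmf_mix_pmf[OF G])
  have "AE ys in ?L. ys \<in> {ys. \<bar>eta_tilde s (Ghat ys) ys - eta_hat (Ghat ys)\<bar> > r} \<longrightarrow> ys \<in> ?out \<union> ?chi"
  proof (rule AE_pmfI, rule impI, rule ccontr)
    fix ys assume ys: "ys \<in> set_pmf ?L" and err: "ys \<in> {ys. \<bar>eta_tilde s (Ghat ys) ys - eta_hat (Ghat ys)\<bar> > r}"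
      and "ys \<notin> ?out \<union> ?chi"
    then have sub: "set ys \<subseteq> S" and chi: "chi_square S ?Q n ys \<le> u" and len: "length ys = n"
      by (auto simp: set_replicate_pmf)
    have "\<bar>eta_tilde s (Ghat ys) ys - eta_hat (Ghat ys)\<bar>
        \<le> error_bound (chi_square S ?Q n ys) (1 - (\<Sum>y\<in>S. mix s G y))"
      using eta_tilde_minus_eta_hat_le_error_bound[OF G GMLE S sub _ pos] n len by auto
    also have "\<dots> \<le> r"
      using chi r sum_mix_le_1[OF G S] by (intro order_trans[OF error_bound_mono r] chi_square_nonneg pos_Q) auto
    finally show False using err by simp
  qed
  then have "data_prob s G n {ys. \<bar>eta_tilde s (Ghat ys) ys - eta_hat (Ghat ys)\<bar> > r} \<le> measure ?L (?out \<union> ?chi)"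
    unfolding data_prob_eq_measure[OF G] by (intro measure_pmf.finite_measure_mono_AE) auto
  also have "\<dots> \<le> measure ?L ?out + measure ?L ?chi"
    by (rule measure_Un_le) auto
  also have "\<dots> \<le> real n * (1 - measure ?Q S) + real (card S) / (real n * u)"
    by (intro add_mono measure_replicate_pmf_not_lists measure_chi_square_gt_le[OF S n pos_Q u])
  finally show ?thesis
    by (simp add: measure_measure_pmf_finite[OF S] pmf_mix_pmf[OF G])
qed

lemma bigOp_finite_support:
  assumes G: "is_param_dist s G" and GMLE: "\<And>ys. is_GMLE s ys (Ghat ys)"
    and supp: "finite {y. mix s G y \<noteq> 0}"
  shows "bigOp s G (\<lambda>n ys. eta_tilde s (Ghat ys) ys - eta_hat (Ghat ys)) (\<lambda>n. 1 / sqrt (real n))"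
  unfolding bigOp_def
proof (intro allI impI)
  fix \<epsilon> :: real assume \<epsilon>: "\<epsilon> > 0"
  define S where "S = {y. mix s G y \<noteq> 0}"
  have pos: "y \<in> S \<Longrightarrow> mix s G y > 0" for y
    using mix_nonneg[OF G, of y] by (auto simp: S_def)
  have sum_S: "(\<Sum>y\<in>S. mix s G y) = 1"
    using supp by (intro sum_mix_support_eq_1[OF G]) (auto simp: S_def)
  define M' where "M' = (real (card S) + 1) / \<epsilon>"
  have M': "M' > 0" using \<epsilon> by (simp add: M'_def)
  show "\<exists>M N. \<forall>n\<ge>N. data_prob s G n {ys. \<bar>eta_tilde s (Ghat ys) ys - eta_hat (Ghat ys)\<bar> > M * (1 / sqrt (real n))} < \<epsilon>"
  proof (intro exI allI impI)
    fix n :: nat assume "n \<ge> 1"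
    then have n: "n > 0" and "real n \<le> real n * real n"
      by auto
    then have sqrt_n: "sqrt (real n) \<le> real n"
      using real_sqrt_le_mono[of "real n" "real n * real n"] by simp
    have "error_bound (M' / real n) (1 - (\<Sum>y\<in>S. mix s G y)) = 5 * (sqrt M' / sqrt (real n)) + 4 * (M' / real n)"
      by (simp add: error_bound_def sum_S real_sqrt_divide)
    also have "\<dots> \<le> 5 * (sqrt M' / sqrt (real n)) + 4 * (M' / sqrt (real n))"
      using sqrt_n M' n by (intro add_left_mono mult_left_mono divide_left_mono) auto
    also have "\<dots> = (5 * sqrt M' + 4 * M') * (1 / sqrt (real n))"
      by (simp add: add_divide_distrib)
    finally have "data_prob s G n {ys. \<bar>eta_tilde s (Ghat ys) ys - eta_hat (Ghat ys)\<bar> > (5 * sqrt M' + 4 * M') * (1 / sqrt (real n))}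
        \<le> real n * (1 - (\<Sum>y\<in>S. mix s G y)) + real (card S) / (real n * (M' / real n))"
      using M' n supp by (intro data_prob_error_gt_le[OF G GMLE _ pos n]) (auto simp: S_def)
    also have "\<dots> = real (card S) * \<epsilon> / (real (card S) + 1)"
      using n \<epsilon> by (simp add: sum_S M'_def)
    also have "\<dots> < \<epsilon>" using \<epsilon> by (simp add: field_simps)
    finally show "data_prob s G n {ys. \<bar>eta_tilde s (Ghat ys) ys - eta_hat (Ghat ys)\<bar> > (5 * sqrt M' + 4 * M') * (1 / sqrt (real n))} < \<epsilon>" .
  qed
qed

lemma error_bound_le_sqrt:
  assumes "0 \<le> u" "u \<le> 1" "0 \<le> t" "t \<le> 1"
  shows "error_bound u t \<le> 10 * sqrt u + 4 * sqrt t"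
proof -
  have "u * u \<le> u * 1" "t * t \<le> t * 1"
    using assms by (intro mult_left_mono; simp)+
  then have "u \<le> sqrt u" "t \<le> sqrt t"
    by (intro real_le_rsqrt; simp add: power2_eq_square)+
  moreover have "0 \<le> (sqrt u - sqrt t)\<^sup>2" by simp
  then have "2 * sqrt u * sqrt t \<le> u + t"
    using assms by (simp add: power2_eq_square algebra_simps)
  ultimately show ?thesis unfolding error_bound_def by linarith
qed

text \<open>The constants 20 and 8 make each term of \<open>error_bound_le_sqrt\<close> at most half the target.\<close>

lemma error_bound_le_log_rate:
  fixes K \<delta> \<alpha> \<tau> :: real and n :: nat
  assumes K: "K > 0" and \<delta>_pos: "\<delta> > 0" and \<alpha>_pos: "\<alpha> > 0"
    and L1: "ln (real n) \<ge> 1" and LB: "ln (real n) \<ge> (20 * sqrt K / \<delta>) powr (2 / \<alpha>)"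
    and u_le_1: "K * ln (real n) / real n \<le> 1" and \<tau>_nonneg: "0 \<le> \<tau>" and \<tau>_le_1: "\<tau> \<le> 1"
    and \<tau>_le: "\<tau> \<le> (\<delta> / 8)\<^sup>2 / real n"
  shows "error_bound (K * ln (real n) / real n) \<tau> \<le> \<delta> * (ln (real n) powr ((1 + \<alpha>) / 2) / sqrt (real n))"
proof -
  define L where "L = ln (real n)"
  have L_pos: "L > 0" using L1 by (simp add: L_def)
  have n_pos: "real n > 0" using L1 by (auto intro: ccontr)
  have u_nonneg: "0 \<le> K * L / real n" using K L_pos n_pos by simp
  have bound: "error_bound (K * L / real n) \<tau> \<le> 10 * sqrt (K * L / real n) + 4 * sqrt \<tau>"
    by (rule error_bound_le_sqrt[OF u_nonneg _ \<tau>_nonneg \<tau>_le_1]) (use u_le_1 in \<open>simp add: L_def\<close>)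
  have sqrt_u: "sqrt (K * L / real n) = sqrt K * sqrt L / sqrt (real n)" by (simp add: real_sqrt_mult real_sqrt_divide)
  have sqrt_\<tau>: "sqrt \<tau> \<le> (\<delta> / 8) / sqrt (real n)"
  proof -
    have "sqrt \<tau> \<le> sqrt ((\<delta> / 8)\<^sup>2 / real n)" using \<tau>_le by (rule real_sqrt_le_mono)
    also have "\<dots> = (\<delta> / 8) / sqrt (real n)" using \<delta>_pos by (simp add: real_sqrt_divide)
    finally show ?thesis .
  qed
  have split: "L powr ((1 + \<alpha>) / 2) = sqrt L * L powr (\<alpha> / 2)"
    using L_pos by (simp add: powr_add[symmetric] powr_half_sqrt[symmetric] add_divide_distrib)
  have L_powr: "L powr (\<alpha> / 2) \<ge> 20 * sqrt K / \<delta>"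
  proof -
    have "L powr (\<alpha> / 2) \<ge> ((20 * sqrt K / \<delta>) powr (2 / \<alpha>)) powr (\<alpha> / 2)"
      using LB \<alpha>_pos by (intro powr_mono2) (auto simp: L_def)
    also have "((20 * sqrt K / \<delta>) powr (2 / \<alpha>)) powr (\<alpha> / 2) = 20 * sqrt K / \<delta>"
      using K \<delta>_pos \<alpha>_pos by (simp add: powr_powr)
    finally show ?thesis .
  qed
  have L_powr_ge_1: "L powr ((1 + \<alpha>) / 2) \<ge> 1" using L1 \<alpha>_pos by (simp add: L_def ge_one_powr_ge_zero)
  have "10 * (sqrt K * sqrt L / sqrt (real n)) \<le> (\<delta> / 2) * (L powr ((1 + \<alpha>) / 2) / sqrt (real n))"
  proof -
    have "20 * sqrt K \<le> \<delta> * L powr (\<alpha> / 2)" using L_powr \<delta>_pos by (simp add: field_simps)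
    then have "20 * sqrt K * sqrt L \<le> \<delta> * L powr (\<alpha> / 2) * sqrt L" using L_pos by (intro mult_right_mono) auto
    then show ?thesis using n_pos by (simp add: split field_simps)
  qed
  moreover have "4 * ((\<delta> / 8) / sqrt (real n)) \<le> (\<delta> / 2) * (L powr ((1 + \<alpha>) / 2) / sqrt (real n))"
  proof -
    have "\<delta> / 2 \<le> (\<delta> / 2) * L powr ((1 + \<alpha>) / 2)" using L_powr_ge_1 \<delta>_pos by simp
    then show ?thesis using n_pos by (simp add: field_simps)
  qed
  ultimately have "error_bound (K * L / real n) \<tau> \<le> \<delta> * (L powr ((1 + \<alpha>) / 2) / sqrt (real n))"
    using bound sqrt_u sqrt_\<tau> by linarith
  then show ?thesis by (simp add: L_def)
qed

lemma data_prob_error_gt_le_log_rate: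
  assumes G: "is_param_dist s G" and GMLE: "\<And>ys. is_GMLE s ys (Ghat ys)"
    and S: "finite S" and pos: "\<And>y. y \<in> S \<Longrightarrow> mix s G y > 0"
    and K: "K > 0" and \<delta>: "\<delta> > 0" and \<alpha>: "\<alpha> > 0"
    and L1: "ln (real n) \<ge> 1" and LB: "ln (real n) \<ge> (20 * sqrt K / \<delta>) powr (2 / \<alpha>)"
    and u: "K * ln (real n) / real n \<le> 1"
    and \<tau>: "1 - (\<Sum>y\<in>S. mix s G y) \<le> (\<delta> / 8)\<^sup>2 / real n"
  shows "data_prob s G n {ys. \<bar>eta_tilde s (Ghat ys) ys - eta_hat (Ghat ys)\<bar>
            > \<delta> * (ln (real n) powr ((1 + \<alpha>) / 2) / sqrt (real n))}
          \<le> real n * (1 - (\<Sum>y\<in>S. mix s G y)) + real (card S) / (K * ln (real n))"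
proof -
  have n: "n > 0" using L1 by (auto intro: ccontr)
  have "0 < ln (real n)" using L1 by linarith
  then have u_pos: "0 < K * ln (real n) / real n" using K n by simp
  have "0 \<le> (\<Sum>y\<in>S. mix s G y)" "(\<Sum>y\<in>S. mix s G y) \<le> 1"
    using mix_nonneg[OF G] sum_mix_le_1[OF G S] by (auto intro: sum_nonneg)
  then have "error_bound (K * ln (real n) / real n) (1 - (\<Sum>y\<in>S. mix s G y))
      \<le> \<delta> * (ln (real n) powr ((1 + \<alpha>) / 2) / sqrt (real n))"
    by (intro error_bound_le_log_rate[OF K \<delta> \<alpha> L1 LB u _ _ \<tau>]) auto
  from data_prob_error_gt_le[OF G GMLE S pos n u_pos this] show ?thesis
    using n by simp
qed

lemma littleOp_log_rate:
  assumes G: "is_param_dist s G" and GMLE: "\<And>ys. is_GMLE s ys (Ghat ys)"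
    and eps: "\<And>n. eps n > 0"
    and tail: "(\<lambda>n. infsum (mix s G) (- {y. mix s G y \<ge> eps n / real n})) \<in> o(\<lambda>n. 1 / real n)"
    and card: "(\<lambda>n. real (card {y. mix s G y \<ge> eps n / real n})) \<in> O(\<lambda>n. ln (real n))"
    and \<alpha>: "\<alpha> > 0"
  shows "littleOp s G (\<lambda>n ys. eta_tilde s (Ghat ys) ys - eta_hat (Ghat ys))
           (\<lambda>n. ln (real n) powr ((1 + \<alpha>) / 2) / sqrt (real n))"
  unfolding littleOp_def
proof (intro allI impI)
  fix \<delta> \<epsilon> :: real assume \<delta>: "\<delta> > 0" and \<epsilon>: "\<epsilon> > 0"
  define S where "S n = {y. eps n / real n \<le> mix s G y}" for n
  obtain C where C: "C > 0"
    and ev_card: "eventually (\<lambda>n. norm (real (card (S n))) \<le> C * norm (ln (real n))) sequentially"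
    using landau_o.bigE[OF card] unfolding S_def by blast
  define c where "c = min (\<epsilon> / 4) ((\<delta> / 8)\<^sup>2)"
  have "c > 0" using \<epsilon> \<delta> by (simp add: c_def)
  then have ev_tail: "eventually (\<lambda>n. norm (infsum (mix s G) (- S n)) \<le> c * norm (1 / real n)) sequentially"
    using landau_o.smallD[OF tail] unfolding S_def by blast
  define K where "K = 4 * C / \<epsilon>"
  have K: "K > 0" using C \<epsilon> by (simp add: K_def)
  define B where "B = (20 * sqrt K / \<delta>) powr (2 / \<alpha>)"
  have "eventually (\<lambda>n. ln (real n) \<ge> 1) sequentially"
    and "eventually (\<lambda>n. ln (real n) \<ge> B) sequentially"
    and "eventually (\<lambda>n. K * ln (real n) / real n \<le> 1) sequentially"
    by real_asymp+
  with ev_card ev_tail have "eventually (\<lambda>n. data_prob s G n {ys. \<bar>eta_tilde s (Ghat ys) ys - eta_hat (Ghat ys)\<bar>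
      > \<delta> * (ln (real n) powr ((1 + \<alpha>) / 2) / sqrt (real n))} < \<epsilon>) sequentially"
  proof eventually_elim
    case (elim n)
    then have n: "real n > 0" and L: "ln (real n) > 0" by (auto intro: ccontr)
    have thr: "eps n / real n > 0" using eps[of n] n by simp
    then have S: "finite (S n)" and pos: "\<And>y. y \<in> S n \<Longrightarrow> mix s G y > 0"
      using finite_mix_ge[OF G thr] by (auto simp: S_def)
    have \<tau>: "1 - (\<Sum>y\<in>S n. mix s G y) \<le> c / real n"
      using elim(2) infsum_mix_compl[OF G S] sum_mix_le_1[OF G S] n by simp
    have "data_prob s G n {ys. \<bar>eta_tilde s (Ghat ys) ys - eta_hat (Ghat ys)\<bar>
            > \<delta> * (ln (real n) powr ((1 + \<alpha>) / 2) / sqrt (real n))}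
          \<le> real n * (1 - (\<Sum>y\<in>S n. mix s G y)) + real (card (S n)) / (K * ln (real n))"
    proof (rule data_prob_error_gt_le_log_rate[OF G GMLE S pos K \<delta> \<alpha>])
      have "c / real n \<le> (\<delta> / 8)\<^sup>2 / real n"
        using n by (intro divide_right_mono) (auto simp: c_def)
      then show "1 - (\<Sum>y\<in>S n. mix s G y) \<le> (\<delta> / 8)\<^sup>2 / real n"
        using \<tau> by linarith
    qed (use elim(3-5) in \<open>simp_all add: B_def\<close>)
    also have "real n * (1 - (\<Sum>y\<in>S n. mix s G y)) \<le> \<epsilon> / 4"
      using \<tau> n by (simp add: c_def field_simps)
    also have "real (card (S n)) / (K * ln (real n)) \<le> C * ln (real n) / (K * ln (real n))"
      using elim(1) K L by (intro divide_right_mono) auto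
    also have "C * ln (real n) / (K * ln (real n)) = \<epsilon> / 4"
      using L C \<epsilon> by (simp add: K_def field_simps)
    finally show ?case using \<epsilon> by simp
  qed
  then show "\<exists>N. \<forall>n\<ge>N. data_prob s G n {ys. \<bar>eta_tilde s (Ghat ys) ys - eta_hat (Ghat ys)\<bar>
      > \<delta> * (ln (real n) powr ((1 + \<alpha>) / 2) / sqrt (real n))} < \<epsilon>"
    by (simp add: eventually_sequentially)
qed

theorem corollary2:
  fixes s :: sampling and G :: "(real \<times> real) measure"
    and Ghat :: "(nat \<times> nat) list \<Rightarrow> (real \<times> real) measure"
  assumes kappa: "\<And>\<kappa>. s = BinomS \<kappa> \<Longrightarrow> \<kappa> \<ge> 1"
    and G: "is_param_dist s G"
    and bounded: "\<exists>B. AE \<theta> in G. norm \<theta> \<le> B"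
    and tail: "\<exists>eps :: nat \<Rightarrow> real. (\<forall>n. eps n > 0) \<and> eps \<longlonglongrightarrow> 0 \<and>
        (\<lambda>n. infsum (mix s G) (- {y. mix s G y \<ge> eps n / real n})) \<in> o(\<lambda>n. 1 / real n) \<and>
        (\<lambda>n. real (card {y. mix s G y \<ge> eps n / real n})) \<in> O(\<lambda>n. ln (real n))"
    and GMLE: "\<And>ys. is_GMLE s ys (Ghat ys)"
  shows "(case s of
            BinomS \<kappa> \<Rightarrow> bigOp s G (\<lambda>n ys. eta_tilde s (Ghat ys) ys - eta_hat (Ghat ys))
                            (\<lambda>n. 1 / sqrt (real n))
          | PoisS \<Rightarrow> (\<forall>\<alpha>>0. littleOp s G (\<lambda>n ys. eta_tilde s (Ghat ys) ys - eta_hat (Ghat ys))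
                            (\<lambda>n. ln (real n) powr ((1 + \<alpha>) / 2) / sqrt (real n))))"
proof (cases s)
  case (BinomS \<kappa>)
  have "finite {y. mix s G y \<noteq> 0}"
    using support_mix_BinomS[of \<kappa> G] BinomS by (auto intro: finite_subset)
  with BinomS show ?thesis
    using bigOp_finite_support[OF G GMLE] by simp
next
  case PoisS
  from tail obtain eps :: "nat \<Rightarrow> real" where eps: "\<And>n. eps n > 0"
    and eps_tail: "(\<lambda>n. infsum (mix s G) (- {y. mix s G y \<ge> eps n / real n})) \<in> o(\<lambda>n. 1 / real n)"
    and eps_card: "(\<lambda>n. real (card {y. mix s G y \<ge> eps n / real n})) \<in> O(\<lambda>n. ln (real n))"
    by blast
  with PoisS show ?thesis
    using littleOp_log_rate[OF G GMLE eps eps_tail eps_card] by simp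
qed

end
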